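(* Let $\mathfrak V$ be a vessel on $\Omega\subseteq\mathbb R$. Then for all $x\in\Omega$ and all $u\in D(A)$, $\sigma_1\frac{d}{dx}[C(x)\mathbb X^{-1}(x)]u=\sigma_2C(x)\mathbb X^{-1}(x)Au+\gamma_*(x)C(x)\mathbb X^{-1}(x)u$, and $\frac{d}{dx}[\mathbb X^{-1}(x)B(x)]\sigma_1=A_\zeta\mathbb X^{-1}(x)B(x)\sigma_2-\mathbb X^{-1}(x)B(x)\gamma_*(x)$.
   Context: A Krein space $\mathcal K$ is a Hilbert space with an extra continuous Hermitian (possibly indefinite) sesquilinear form; adjoints are with respect to it. Fix $2\times2$ matrices $\sigma_1$ (invertible, self-adjoint), $\sigma_2=\sigma_2^*$, $\gamma=-\gamma^*$. A node $(C,A_\zeta,\mathbb X,A,B;\sigma_1)$: bounded $C:\mathcal K\to\mathbb C^2$, $\mathbb X:\mathcal K\to\mathcal K$, $B:\mathbb C^2\to\mathcal K$, generators $A,A_\zeta$ of strongly continuous groups with common dense domain $D(A)=D(A_\zeta)$, with $\mathbb X(D(A))\subseteq D(A)$ and $A\mathbb Xu+\mathbb XA_\zeta u+B\sigma_1Cu=0$ for $u\in D(A)$; invertible if $\mathbb X$ is boundedly invertible and $\mathbb X^{-1}(D(A))\subseteq D(A)$. A prevessel: fixed $A,A_\zeta$ and bounded operators $C(x),\mathbb X(x),B(x)$ differentiable in $x\in\mathbb R$, each tuple a node, $B(x)\sigma_2e\in D(A)$ for $e\in\mathbb C^2$, with $\partial_xB=-(AB\sigma_2+B\gamma)\sigma_1^{-1}$,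 $\partial_xCu=\sigma_1^{-1}(-\sigma_2CA_\zeta u+\gamma Cu)$ ($u\in D(A)$), $\partial_x\mathbb X=B\sigma_2C$. A vessel on $\Omega$: a prevessel whose node is invertible for all $x\in\Omega$, with $\gamma_*(x)=\gamma+\sigma_2C\mathbb X^{-1}B\sigma_1-\sigma_1C\mathbb X^{-1}B\sigma_2$ on $\Omega$. *)

theory Defs
  imports "HOL-Analysis.Analysis"
begin

text \<open>A complex Hilbert space is modelled as a real Hilbert space together with an
orthogonal complex structure J (multiplication by the imaginary unit).\<close>

definition cscale :: "('k::real_vector \<Rightarrow> 'k) \<Rightarrow> complex \<Rightarrow> 'k \<Rightarrow> 'k" where
  "cscale J c u = Re c *\<^sub>R u + Im c *\<^sub>R J u"

definition complex_structure :: "('k::real_inner \<Rightarrow> 'k) \<Rightarrow> bool" where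
  "complex_structure J \<longleftrightarrow> bounded_linear J \<and> (\<forall>u. J (J u) = - u)
     \<and> (\<forall>u v. inner (J u) (J v) = inner u v)"

text \<open>Krein space: complex Hilbert space with a continuous Hermitian sesquilinear form K
(linear in the first argument, conjugate linear in the second by Hermitian symmetry).\<close>
definition krein_space :: "('k::{real_inner,complete_space} \<Rightarrow> 'k) \<Rightarrow> ('k \<Rightarrow> 'k \<Rightarrow> complex) \<Rightarrow> bool" where
  "krein_space J K \<longleftrightarrow> complex_structure J
     \<and> (\<forall>c u v w. K (cscale J c u + v) w = c * K u w + K v w)
     \<and> (\<forall>u v. K u v = cnj (K v u))
     \<and> (\<exists>M. \<forall>u v. norm (K u v) \<le> M * norm u * norm v)"

definition clin_KK :: "('k::real_normed_vector \<Rightarrow> 'k) \<Rightarrow> ('k \<Rightarrow> 'k) \<Rightarrow> bool" where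
  "clin_KK J T \<longleftrightarrow> bounded_linear T \<and> (\<forall>u. T (J u) = J (T u))"

definition clin_K2 :: "('k::real_normed_vector \<Rightarrow> 'k) \<Rightarrow> ('k \<Rightarrow> complex^2) \<Rightarrow> bool" where
  "clin_K2 J T \<longleftrightarrow> bounded_linear T \<and> (\<forall>u. T (J u) = \<i> *s T u)"

definition clin_2K :: "('k::real_normed_vector \<Rightarrow> 'k) \<Rightarrow> (complex^2 \<Rightarrow> 'k) \<Rightarrow> bool" where
  "clin_2K J T \<longleftrightarrow> bounded_linear T \<and> (\<forall>e. T (\<i> *s e) = J (T e))"

definition c0_group :: "('k::real_normed_vector \<Rightarrow> 'k) \<Rightarrow> (real \<Rightarrow> 'k \<Rightarrow> 'k) \<Rightarrow> bool" where
  "c0_group J T \<longleftrightarrow> (\<forall>t. clin_KK J (T t)) \<and> T 0 = id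
     \<and> (\<forall>s t. T (s + t) = T s \<circ> T t) \<and> (\<forall>u. continuous_on UNIV (\<lambda>t. T t u))"

definition gen_dom :: "(real \<Rightarrow> 'k::real_normed_vector \<Rightarrow> 'k) \<Rightarrow> 'k set" where
  "gen_dom T = {u. \<exists>v. ((\<lambda>t. T t u) has_vector_derivative v) (at 0)}"

definition is_generator :: "('k::real_normed_vector \<Rightarrow> 'k) \<Rightarrow> ('k \<Rightarrow> 'k) \<Rightarrow> 'k set \<Rightarrow> bool" where
  "is_generator J A D \<longleftrightarrow> (\<exists>T. c0_group J T \<and> D = gen_dom T
      \<and> (\<forall>u\<in>D. ((\<lambda>t. T t u) has_vector_derivative A u) (at 0)))"

definition cadj :: "complex^2^2 \<Rightarrow> complex^2^2" where
  "cadj M = (\<chi> i j. cnj (M $ j $ i))"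

text \<open>Inverse of a bounded operator (meaningful when it is boundedly invertible).\<close>
definition binv :: "('k::real_normed_vector \<Rightarrow>\<^sub>L 'k) \<Rightarrow> ('k \<Rightarrow>\<^sub>L 'k)" where
  "binv X = (THE Y. Y o\<^sub>L X = id_blinfun \<and> X o\<^sub>L Y = id_blinfun)"

definition is_node ::
  "('k::real_normed_vector \<Rightarrow> 'k) \<Rightarrow> ('k \<Rightarrow>\<^sub>L (complex^2)) \<Rightarrow> ('k \<Rightarrow> 'k) \<Rightarrow> ('k \<Rightarrow>\<^sub>L 'k)
   \<Rightarrow> ('k \<Rightarrow> 'k) \<Rightarrow> 'k set \<Rightarrow> ((complex^2) \<Rightarrow>\<^sub>L 'k) \<Rightarrow> complex^2^2 \<Rightarrow> bool" where
  "is_node J C Az X A D B \<sigma>1 \<longleftrightarrow>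
     is_generator J A D \<and> is_generator J Az D
     \<and> clin_K2 J (blinfun_apply C) \<and> clin_KK J (blinfun_apply X) \<and> clin_2K J (blinfun_apply B)
     \<and> blinfun_apply X ` D \<subseteq> D
     \<and> (\<forall>u\<in>D. A (X u) + X (Az u) + B (\<sigma>1 *v C u) = 0)"

definition invertible_node :: "('k::real_normed_vector \<Rightarrow>\<^sub>L 'k) \<Rightarrow> 'k set \<Rightarrow> bool" where
  "invertible_node X D \<longleftrightarrow> (\<exists>Y. Y o\<^sub>L X = id_blinfun \<and> X o\<^sub>L Y = id_blinfun \<and> blinfun_apply Y ` D \<subseteq> D)"

definition prevessel ::
  "('k::real_normed_vector \<Rightarrow> 'k) \<Rightarrow> complex^2^2 \<Rightarrow> complex^2^2 \<Rightarrow> complex^2^2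
   \<Rightarrow> ('k \<Rightarrow> 'k) \<Rightarrow> ('k \<Rightarrow> 'k) \<Rightarrow> 'k set
   \<Rightarrow> (real \<Rightarrow> 'k \<Rightarrow>\<^sub>L (complex^2)) \<Rightarrow> (real \<Rightarrow> 'k \<Rightarrow>\<^sub>L 'k) \<Rightarrow> (real \<Rightarrow> (complex^2) \<Rightarrow>\<^sub>L 'k) \<Rightarrow> bool" where
  "prevessel J \<sigma>1 \<sigma>2 \<gamma> A Az D C X B \<longleftrightarrow>
     (\<forall>x. is_node J (C x) Az (X x) A D (B x) \<sigma>1
        \<and> (\<forall>e. B x (\<sigma>2 *v e) \<in> D)
        \<and> (\<exists>B'. (B has_vector_derivative B') (at x)
             \<and> (\<forall>e. B' e = - (A (B x (\<sigma>2 *v (matrix_inv \<sigma>1 *v e))) + B x (\<gamma> *v (matrix_inv \<sigma>1 *v e)))))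
        \<and> (\<exists>C'. (C has_vector_derivative C') (at x)
             \<and> (\<forall>u\<in>D. C' u = matrix_inv \<sigma>1 *v (- (\<sigma>2 *v C x (Az u)) + \<gamma> *v C x u)))
        \<and> (\<exists>X'. (X has_vector_derivative X') (at x)
             \<and> (\<forall>u. X' u = B x (\<sigma>2 *v C x u))))"

text \<open>gamma_star(x), as the linear map on complex^2 it defines:
  gamma + sigma2 C X^-1 B sigma1 - sigma1 C X^-1 B sigma2.\<close>
definition gamma_star ::
  "complex^2^2 \<Rightarrow> complex^2^2 \<Rightarrow> complex^2^2
   \<Rightarrow> ('k::real_normed_vector \<Rightarrow>\<^sub>L (complex^2)) \<Rightarrow> ('k \<Rightarrow>\<^sub>L 'k) \<Rightarrow> ((complex^2) \<Rightarrow>\<^sub>L 'k)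
   \<Rightarrow> complex^2 \<Rightarrow> complex^2" where
  "gamma_star \<sigma>1 \<sigma>2 \<gamma> C X B e =
     \<gamma> *v e + \<sigma>2 *v C (binv X (B (\<sigma>1 *v e))) - \<sigma>1 *v C (binv X (B (\<sigma>2 *v e)))"

definition vessel ::
  "('k::real_normed_vector \<Rightarrow> 'k) \<Rightarrow> complex^2^2 \<Rightarrow> complex^2^2 \<Rightarrow> complex^2^2
   \<Rightarrow> ('k \<Rightarrow> 'k) \<Rightarrow> ('k \<Rightarrow> 'k) \<Rightarrow> 'k set
   \<Rightarrow> (real \<Rightarrow> 'k \<Rightarrow>\<^sub>L (complex^2)) \<Rightarrow> (real \<Rightarrow> 'k \<Rightarrow>\<^sub>L 'k) \<Rightarrow> (real \<Rightarrow> (complex^2) \<Rightarrow>\<^sub>L 'k)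
   \<Rightarrow> real set \<Rightarrow> bool" where
  "vessel J \<sigma>1 \<sigma>2 \<gamma> A Az D C X B \<Omega> \<longleftrightarrow>
     prevessel J \<sigma>1 \<sigma>2 \<gamma> A Az D C X B \<and> (\<forall>x\<in>\<Omega>. invertible_node (X x) D)"

end

theory Submission
  imports Defs
begin

text \<open>Conjugating the node identity A X + X Az + B \<sigma>1 C = 0 by X^-1 gives, on D,
  Az X^-1 = - X^-1 A - X^-1 B \<sigma>1 C X^-1. Differentiating C X^-1 and X^-1 B by the product rule,
  with (X^-1)' = - X^-1 X' X^-1 = - X^-1 B \<sigma>2 C X^-1 and the prescribed derivatives of B and C,
  every resulting term is either the claimed A- resp. Az-term or one of the three summands of
  gamma_star. The only analytic input is that operator inversion is differentiable, which follows
  from a Neumann-series perturbation bound.\<close>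

lemma has_vector_derivative_iff_tendsto_quotient:
  fixes f :: "real \<Rightarrow> 'b::real_normed_vector"
  shows "(f has_vector_derivative f') (at x) \<longleftrightarrow> ((\<lambda>y. (f y - f x) /\<^sub>R (y - x)) \<longlongrightarrow> f') (at x)"
proof -
  have "\<forall>\<^sub>F y in at x. norm (f y - f x - (y - x) *\<^sub>R f') / norm (y - x)
      = norm ((f y - f x) /\<^sub>R (y - x) - f')"
  proof (rule eventually_mono)
    show "\<forall>\<^sub>F y in at x. y \<noteq> x" by (simp add: eventually_at_filter)
    fix y :: real assume "y \<noteq> x"
    then have "(f y - f x) /\<^sub>R (y - x) - f' = (f y - f x - (y - x) *\<^sub>R f') /\<^sub>R (y - x)"
      by (simp add: scaleR_diff_right)
    then show "norm (f y - f x - (y - x) *\<^sub>R f') / norm (y - x) = norm ((f y - f x) /\<^sub>R (y - x) - f')"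
      by (simp add: divide_inverse_commute)
  qed
  then have "((\<lambda>y. norm (f y - f x - (y - x) *\<^sub>R f') / norm (y - x)) \<longlongrightarrow> 0) (at x)
      \<longleftrightarrow> ((\<lambda>y. norm ((f y - f x) /\<^sub>R (y - x) - f')) \<longlongrightarrow> 0) (at x)"
    by (rule tendsto_cong)
  then show ?thesis
    by (simp add: has_vector_derivative_def has_derivative_iff_norm bounded_linear_scaleR_left
        tendsto_norm_zero_iff LIM_zero_iff)
qed

lemma matrix_vector_mult_uminus_right: "(M::'a::ring_1^'n^'m) *v (- w) = - (M *v w)"
  by (metis diff_0 matrix_vector_mult_diff_distrib matrix_vector_mult_0_right)

lemma matrix_inv_cancel:
  fixes M :: "'a::semiring_1^'n^'m"
  assumes "invertible M"
  shows "M *v (matrix_inv M *v w) = w" and "matrix_inv M *v (M *v v) = v"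
proof -
  have "M ** matrix_inv M = mat 1 \<and> matrix_inv M ** M = mat 1"
    using assms unfolding invertible_def matrix_inv_def by (rule someI_ex)
  then show "M *v (matrix_inv M *v w) = w" and "matrix_inv M *v (M *v v) = v"
    by (simp_all add: matrix_vector_mul_assoc)
qed

lemma blinfun_compose_assoc: "(a o\<^sub>L b) o\<^sub>L c = a o\<^sub>L (b o\<^sub>L c)"
  by (rule blinfun_eqI) simp

lemma blinfun_compose_id [simp]: "id_blinfun o\<^sub>L a = a" "a o\<^sub>L id_blinfun = a"
  by (auto intro: blinfun_eqI)

lemma blinfun_left_inverse_apply: "Y o\<^sub>L X = id_blinfun \<Longrightarrow> Y (X v) = v"
  by (metis blinfun_apply_blinfun_compose blinfun_apply_id_blinfun)

lemma binv_eqI: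
  assumes "Y o\<^sub>L X = id_blinfun" "X o\<^sub>L Y = id_blinfun"
  shows "binv X = Y"
  unfolding binv_def
proof (rule the_equality)
  show "Y o\<^sub>L X = id_blinfun \<and> X o\<^sub>L Y = id_blinfun" using assms by simp
  fix Z assume "Z o\<^sub>L X = id_blinfun \<and> X o\<^sub>L Z = id_blinfun"
  then show "Z = Y" using assms by (metis blinfun_compose_assoc blinfun_compose_id)
qed

text \<open>The Neumann inverse of 1 - T is obtained from Banach's fixed point theorem, as the map
  sending v to the fixed point of s \<mapsto> v + T s, rather than by summing the series.\<close>

lemma id_minus_blinfun_invertible:
  fixes T :: "'a::{real_normed_vector,complete_space} \<Rightarrow>\<^sub>L 'a"
  assumes T: "norm T < 1"
  shows "\<exists>S. S o\<^sub>L (id_blinfun - T) = id_blinfun \<and> (id_blinfun - T) o\<^sub>L S = id_blinfun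
     \<and> norm S * (1 - norm T) \<le> 1"
proof -
  have unique_fix: "\<exists>!s. v + T s = s" for v
  proof (rule banach_fix_type[OF norm_ge_zero T], intro allI)
    fix s1 s2 :: 'a
    have "dist (v + T s1) (v + T s2) = norm (T (s1 - s2))"
      by (simp add: dist_norm blinfun.diff_right)
    also have "\<dots> \<le> norm T * norm (s1 - s2)" by (rule norm_blinfun)
    finally show "dist (v + T s1) (v + T s2) \<le> norm T * dist s1 s2" by (simp add: dist_norm)
  qed
  define S0 where "S0 v = (THE s. v + T s = s)" for v
  have fix_S0: "v + T (S0 v) = S0 v" for v unfolding S0_def by (rule theI'[OF unique_fix])
  have S0_eqI: "v + T s = s \<Longrightarrow> S0 v = s" for v s unfolding S0_def by (rule the1_equality[OF unique_fix])
  have add: "S0 (a + b) = S0 a + S0 b" for a b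
    by (rule S0_eqI) (metis fix_S0 blinfun.add_right add.assoc add.left_commute)
  have scale: "S0 (r *\<^sub>R a) = r *\<^sub>R S0 a" for r a
    by (rule S0_eqI) (metis fix_S0 blinfun.scaleR_right scaleR_right_distrib)
  have pos: "0 < 1 - norm T" using T by simp
  have bound: "norm (S0 v) \<le> norm v * (1 / (1 - norm T))" for v
  proof -
    have "norm (S0 v) \<le> norm v + norm (T (S0 v))"
      by (metis fix_S0 norm_triangle_ineq)
    also have "\<dots> \<le> norm v + norm T * norm (S0 v)" using norm_blinfun[of T "S0 v"] by simp
    finally show ?thesis using pos by (simp add: field_simps)
  qed
  have S0_apply: "blinfun_apply (Blinfun S0) = S0"
    by (rule bounded_linear_Blinfun_apply, rule bounded_linear_intro[OF add scale bound])
  have "Blinfun S0 o\<^sub>L (id_blinfun - T) = id_blinfun"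
    by (rule blinfun_eqI) (simp add: S0_apply blinfun.diff_left S0_eqI)
  moreover have "(id_blinfun - T) o\<^sub>L Blinfun S0 = id_blinfun"
    by (rule blinfun_eqI) (metis S0_apply fix_S0 add_diff_cancel_right' blinfun.diff_left
        blinfun_apply_blinfun_compose blinfun_apply_id_blinfun)
  moreover have "norm (Blinfun S0) * (1 - norm T) \<le> 1"
    using norm_blinfun_bound[of "1 / (1 - norm T)" "Blinfun S0"] pos bound
    by (simp add: S0_apply field_simps)
  ultimately show ?thesis by blast
qed

lemma binv_perturbation:
  fixes X0 X Y0 :: "'a::{real_normed_vector,complete_space} \<Rightarrow>\<^sub>L 'a"
  assumes Y0X0: "Y0 o\<^sub>L X0 = id_blinfun" and X0Y0: "X0 o\<^sub>L Y0 = id_blinfun"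
    and small: "norm (X - X0) * norm Y0 \<le> 1/2"
  shows "binv X o\<^sub>L X = id_blinfun \<and> X o\<^sub>L binv X = id_blinfun \<and> norm (binv X) \<le> 2 * norm Y0"
proof -
  define T where "T = Y0 o\<^sub>L (X0 - X)"
  have "norm T \<le> norm Y0 * norm (X0 - X)" unfolding T_def by (rule norm_blinfun_compose)
  with small have T: "norm T \<le> 1/2" by (simp add: norm_minus_commute mult.commute)
  then obtain S where S1: "S o\<^sub>L (id_blinfun - T) = id_blinfun"
    and S2: "(id_blinfun - T) o\<^sub>L S = id_blinfun" and S3: "norm S * (1 - norm T) \<le> 1"
    using id_minus_blinfun_invertible[of T] by force
  have X_eq: "X = X0 o\<^sub>L (id_blinfun - T)"
    by (rule blinfun_eqI) (simp add: T_def blinfun.diff_right blinfun.diff_left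
        blinfun_left_inverse_apply[OF X0Y0])
  have "(S o\<^sub>L Y0) o\<^sub>L X = id_blinfun" "X o\<^sub>L (S o\<^sub>L Y0) = id_blinfun"
    unfolding X_eq using S1 S2 Y0X0 X0Y0 by (metis blinfun_compose_assoc blinfun_compose_id)+
  moreover from this have "binv X = S o\<^sub>L Y0" by (rule binv_eqI)
  moreover have "norm S \<le> 2"
    using S3 T mult_left_mono[of "1/2" "1 - norm T" "norm S"] by simp
  then have "norm (S o\<^sub>L Y0) \<le> 2 * norm Y0"
    by (meson norm_blinfun_compose norm_ge_zero mult_right_mono order_trans)
  ultimately show ?thesis by simp
qed

lemma left_inverse_diff:
  assumes "L o\<^sub>L X1 = id_blinfun" "X0 o\<^sub>L Y0 = id_blinfun"
  shows "L - Y0 = - (L o\<^sub>L (X1 - X0) o\<^sub>L Y0)"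
  by (rule blinfun_eqI) (simp add: blinfun.diff_left blinfun.diff_right blinfun.minus_left
      blinfun_left_inverse_apply[OF assms(1)] blinfun_left_inverse_apply[OF assms(2)])

lemma eventually_binv_bounded:
  fixes X :: "'b \<Rightarrow> 'a::{real_normed_vector,complete_space} \<Rightarrow>\<^sub>L 'a"
  assumes "(X \<longlongrightarrow> X0) F" "Y0 o\<^sub>L X0 = id_blinfun" "X0 o\<^sub>L Y0 = id_blinfun"
  shows "\<forall>\<^sub>F y in F. binv (X y) o\<^sub>L X y = id_blinfun \<and> X y o\<^sub>L binv (X y) = id_blinfun
      \<and> norm (binv (X y)) \<le> 2 * norm Y0"
proof -
  have "((\<lambda>y. norm (X y - X0) * norm Y0) \<longlongrightarrow> 0 * norm Y0) F"
    using assms(1) by (intro tendsto_intros) (simp add: tendsto_norm_zero_iff LIM_zero_iff)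
  then have "\<forall>\<^sub>F y in F. norm (X y - X0) * norm Y0 < 1/2"
    by (rule order_tendstoD) simp
  then show ?thesis
    by (rule eventually_mono) (simp add: binv_perturbation[OF assms(2,3)])
qed

lemma tendsto_binv:
  fixes X :: "'b \<Rightarrow> 'a::{real_normed_vector,complete_space} \<Rightarrow>\<^sub>L 'a"
  assumes X: "(X \<longlongrightarrow> X0) F" and "Y0 o\<^sub>L X0 = id_blinfun" and X0Y0: "X0 o\<^sub>L Y0 = id_blinfun"
  shows "((\<lambda>y. binv (X y)) \<longlongrightarrow> Y0) F"
proof (rule LIM_zero_cancel, rule Lim_null_comparison)
  show "\<forall>\<^sub>F y in F. norm (binv (X y) - Y0) \<le> 2 * norm Y0 * norm (X y - X0) * norm Y0"
    using eventually_binv_bounded[OF assms]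
  proof (rule eventually_mono, elim conjE)
    fix y assume inv: "binv (X y) o\<^sub>L X y = id_blinfun" and bound: "norm (binv (X y)) \<le> 2 * norm Y0"
    have "norm (binv (X y) - Y0) = norm (binv (X y) o\<^sub>L (X y - X0) o\<^sub>L Y0)"
      using left_inverse_diff[OF inv X0Y0] by simp
    also have "\<dots> \<le> norm (binv (X y)) * norm (X y - X0) * norm Y0"
      by (meson norm_blinfun_compose mult_right_mono norm_ge_zero order_trans)
    also have "\<dots> \<le> 2 * norm Y0 * norm (X y - X0) * norm Y0"
      using bound by (intro mult_right_mono) auto
    finally show "norm (binv (X y) - Y0) \<le> 2 * norm Y0 * norm (X y - X0) * norm Y0" .
  qed
  show "((\<lambda>y. 2 * norm Y0 * norm (X y - X0) * norm Y0) \<longlongrightarrow> 0) F"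
  proof -
    have "((\<lambda>y. norm (X y - X0)) \<longlongrightarrow> 0) F"
      using X by (simp add: tendsto_norm_zero_iff LIM_zero_iff)
    then show ?thesis by (auto intro: tendsto_mult_left_zero tendsto_mult_right_zero)
  qed
qed

lemma has_vector_derivative_binv:
  fixes X :: "real \<Rightarrow> 'a::{real_normed_vector,complete_space} \<Rightarrow>\<^sub>L 'a"
  assumes X: "(X has_vector_derivative X') (at x)"
    and YX: "Y o\<^sub>L X x = id_blinfun" and XY: "X x o\<^sub>L Y = id_blinfun"
  shows "((\<lambda>y. binv (X y)) has_vector_derivative - (Y o\<^sub>L X' o\<^sub>L Y)) (at x)"
proof -
  have cont: "(X \<longlongrightarrow> X x) (at x)"
    using has_vector_derivative_continuous[OF X] by (simp add: continuous_at)
  have "((\<lambda>y. - (binv (X y) o\<^sub>L ((X y - X x) /\<^sub>R (y - x)) o\<^sub>L Y)) \<longlongrightarrow> - (Y o\<^sub>L X' o\<^sub>L Y)) (at x)"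
    using X unfolding has_vector_derivative_iff_tendsto_quotient
    by (intro tendsto_intros tendsto_binv[OF cont YX XY])
  moreover have "\<forall>\<^sub>F y in at x. - (binv (X y) o\<^sub>L ((X y - X x) /\<^sub>R (y - x)) o\<^sub>L Y)
       = (binv (X y) - binv (X x)) /\<^sub>R (y - x)"
    using eventually_binv_bounded[OF cont YX XY]
  proof (rule eventually_mono, elim conjE)
    fix y assume "binv (X y) o\<^sub>L X y = id_blinfun"
    then have "binv (X y) - binv (X x) = - (binv (X y) o\<^sub>L (X y - X x) o\<^sub>L Y)"
      using left_inverse_diff[OF _ XY] binv_eqI[OF YX XY] by simp
    then show "- (binv (X y) o\<^sub>L ((X y - X x) /\<^sub>R (y - x)) o\<^sub>L Y)
       = (binv (X y) - binv (X x)) /\<^sub>R (y - x)"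
      by (simp add: bounded_bilinear.scaleR_right[OF bounded_bilinear_blinfun_compose]
          bounded_bilinear.scaleR_left[OF bounded_bilinear_blinfun_compose])
  qed
  ultimately show ?thesis
    unfolding has_vector_derivative_iff_tendsto_quotient by (rule Lim_transform_eventually)
qed

lemma node_generator_conjugate:
  assumes "is_node J C Az X A D B \<sigma>1" and "Y o\<^sub>L X = id_blinfun" and "v \<in> D"
  shows "Az v = - Y (A (X v)) - Y (B (\<sigma>1 *v C v))"
proof -
  have "A (X v) + X (Az v) + B (\<sigma>1 *v C v) = 0"
    using assms(1,3) unfolding is_node_def by blast
  then have "Y (A (X v)) + Az v + Y (B (\<sigma>1 *v C v)) = 0"
    by (metis blinfun.add_right blinfun.zero_right blinfun_left_inverse_apply[OF assms(2)])
  then show ?thesis by (simp add: algebra_simps eq_neg_iff_add_eq_0)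
qed

lemma vessel_at_point:
  assumes "vessel J \<sigma>1 \<sigma>2 \<gamma> A Az D C X B \<Omega>" and "x \<in> \<Omega>"
  obtains Y B' C' X' where
    "binv (X x) = Y" "Y o\<^sub>L X x = id_blinfun" "X x o\<^sub>L Y = id_blinfun" "Y ` D \<subseteq> D"
    "\<And>v. v \<in> D \<Longrightarrow> Az v = - Y (A (X x v)) - Y (B x (\<sigma>1 *v C x v))"
    "\<And>e. B x (\<sigma>2 *v e) \<in> D"
    "(B has_vector_derivative B') (at x)"
    "\<And>e. B' e = - (A (B x (\<sigma>2 *v (matrix_inv \<sigma>1 *v e))) + B x (\<gamma> *v (matrix_inv \<sigma>1 *v e)))"
    "(C has_vector_derivative C') (at x)"
    "\<And>u. u \<in> D \<Longrightarrow> C' u = matrix_inv \<sigma>1 *v (- (\<sigma>2 *v C x (Az u)) + \<gamma> *v C x u)"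
    "(X has_vector_derivative X') (at x)"
    "\<And>u. X' u = B x (\<sigma>2 *v C x u)"
proof -
  note vessel = assms(1)[unfolded vessel_def prevessel_def]
  obtain Y where YX: "Y o\<^sub>L X x = id_blinfun" and XY: "X x o\<^sub>L Y = id_blinfun" and YD: "Y ` D \<subseteq> D"
    using vessel assms(2) unfolding invertible_node_def by blast
  have node: "is_node J (C x) Az (X x) A D (B x) \<sigma>1" and BD: "\<And>e. B x (\<sigma>2 *v e) \<in> D"
    using vessel by blast+
  obtain B' where "(B has_vector_derivative B') (at x)"
    "\<And>e. B' e = - (A (B x (\<sigma>2 *v (matrix_inv \<sigma>1 *v e))) + B x (\<gamma> *v (matrix_inv \<sigma>1 *v e)))"
    using vessel by blast
  moreover obtain C' where "(C has_vector_derivative C') (at x)"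
    "\<And>u. u \<in> D \<Longrightarrow> C' u = matrix_inv \<sigma>1 *v (- (\<sigma>2 *v C x (Az u)) + \<gamma> *v C x u)"
    using vessel by blast
  moreover obtain X' where "(X has_vector_derivative X') (at x)" "\<And>u. X' u = B x (\<sigma>2 *v C x u)"
    using vessel by blast
  ultimately show thesis
    using that[OF binv_eqI[OF YX XY] YX XY YD node_generator_conjugate[OF node YX] BD] by blast
qed

lemma vessel_has_vector_derivative_C_binv:
  fixes X :: "real \<Rightarrow> 'k::{real_normed_vector,complete_space} \<Rightarrow>\<^sub>L 'k"
  assumes "vessel J \<sigma>1 \<sigma>2 \<gamma> A Az D C X B \<Omega>" and "x \<in> \<Omega>" and "invertible \<sigma>1"
  shows "\<exists>D'. ((\<lambda>y. C y o\<^sub>L binv (X y)) has_vector_derivative D') (at x)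
            \<and> (\<forall>u\<in>D. \<sigma>1 *v D' u
                 = \<sigma>2 *v C x (binv (X x) (A u))
                   + gamma_star \<sigma>1 \<sigma>2 \<gamma> (C x) (X x) (B x) (C x (binv (X x) u)))"
proof -
  obtain Y B' C' X' where Y: "binv (X x) = Y" "Y o\<^sub>L X x = id_blinfun" "X x o\<^sub>L Y = id_blinfun"
    and YD: "Y ` D \<subseteq> D"
    and Az: "\<And>v. v \<in> D \<Longrightarrow> Az v = - Y (A (X x v)) - Y (B x (\<sigma>1 *v C x v))"
    and "\<And>e. B x (\<sigma>2 *v e) \<in> D"
    and "(B has_vector_derivative B') (at x)"
      "\<And>e. B' e = - (A (B x (\<sigma>2 *v (matrix_inv \<sigma>1 *v e))) + B x (\<gamma> *v (matrix_inv \<sigma>1 *v e)))"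
    and C: "(C has_vector_derivative C') (at x)"
      "\<And>u. u \<in> D \<Longrightarrow> C' u = matrix_inv \<sigma>1 *v (- (\<sigma>2 *v C x (Az u)) + \<gamma> *v C x u)"
    and X: "(X has_vector_derivative X') (at x)" "\<And>u. X' u = B x (\<sigma>2 *v C x u)"
    by (rule vessel_at_point[OF assms(1,2)], rule that)
  have "((\<lambda>y. C y o\<^sub>L binv (X y)) has_vector_derivative
      (C x o\<^sub>L - (Y o\<^sub>L X' o\<^sub>L Y)) + (C' o\<^sub>L Y)) (at x)"
    using bounded_bilinear.has_vector_derivative[OF bounded_bilinear_blinfun_compose C(1)
        has_vector_derivative_binv[OF X(1) Y(2,3)]] Y(1) by simp
  moreover have "\<sigma>1 *v ((C x o\<^sub>L - (Y o\<^sub>L X' o\<^sub>L Y)) + (C' o\<^sub>L Y)) u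
      = \<sigma>2 *v C x (Y (A u)) + gamma_star \<sigma>1 \<sigma>2 \<gamma> (C x) (X x) (B x) (C x (Y u))" if "u \<in> D" for u
  proof -
    have v: "Y u \<in> D" using that YD by blast
    have Az_v: "Az (Y u) = - Y (A u) - Y (B x (\<sigma>1 *v C x (Y u)))"
      using Az[OF v] by (simp add: blinfun_left_inverse_apply[OF Y(3)])
    have C'_v: "\<sigma>1 *v C' (Y u) = - (\<sigma>2 *v C x (Az (Y u))) + \<gamma> *v C x (Y u)"
      using C(2)[OF v] by (simp add: matrix_inv_cancel[OF assms(3)])
    show ?thesis
      by (simp add: gamma_star_def Y X(2) C'_v Az_v blinfun.add_left matrix_vector_right_distrib
          blinfun.minus_left blinfun.minus_right blinfun.diff_right matrix_vector_mult_uminus_right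
          matrix_vector_mult_diff_distrib algebra_simps)
  qed
  ultimately show ?thesis using Y(1) by blast
qed

lemma vessel_has_vector_derivative_binv_B:
  fixes X :: "real \<Rightarrow> 'k::{real_normed_vector,complete_space} \<Rightarrow>\<^sub>L 'k"
  assumes "vessel J \<sigma>1 \<sigma>2 \<gamma> A Az D C X B \<Omega>" and "x \<in> \<Omega>" and "invertible \<sigma>1"
  shows "\<exists>E'. ((\<lambda>y. binv (X y) o\<^sub>L B y) has_vector_derivative E') (at x)
            \<and> (\<forall>e. E' (\<sigma>1 *v e)
                 = Az (binv (X x) (B x (\<sigma>2 *v e)))
                   - binv (X x) (B x (gamma_star \<sigma>1 \<sigma>2 \<gamma> (C x) (X x) (B x) e)))"
proof -
  obtain Y B' C' X' where Y: "binv (X x) = Y" "Y o\<^sub>L X x = id_blinfun" "X x o\<^sub>L Y = id_blinfun"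
    and YD: "Y ` D \<subseteq> D"
    and Az: "\<And>v. v \<in> D \<Longrightarrow> Az v = - Y (A (X x v)) - Y (B x (\<sigma>1 *v C x v))"
    and BD: "\<And>e. B x (\<sigma>2 *v e) \<in> D"
    and B: "(B has_vector_derivative B') (at x)"
      "\<And>e. B' e = - (A (B x (\<sigma>2 *v (matrix_inv \<sigma>1 *v e))) + B x (\<gamma> *v (matrix_inv \<sigma>1 *v e)))"
    and "(C has_vector_derivative C') (at x)"
      "\<And>u. u \<in> D \<Longrightarrow> C' u = matrix_inv \<sigma>1 *v (- (\<sigma>2 *v C x (Az u)) + \<gamma> *v C x u)"
    and X: "(X has_vector_derivative X') (at x)" "\<And>u. X' u = B x (\<sigma>2 *v C x u)"
    by (rule vessel_at_point[OF assms(1,2)], rule that)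
  have "((\<lambda>y. binv (X y) o\<^sub>L B y) has_vector_derivative
      (Y o\<^sub>L B') + (- (Y o\<^sub>L X' o\<^sub>L Y) o\<^sub>L B x)) (at x)"
    using bounded_bilinear.has_vector_derivative[OF bounded_bilinear_blinfun_compose
        has_vector_derivative_binv[OF X(1) Y(2,3)] B(1)] Y(1) by simp
  moreover have "((Y o\<^sub>L B') + (- (Y o\<^sub>L X' o\<^sub>L Y) o\<^sub>L B x)) (\<sigma>1 *v e)
      = Az (Y (B x (\<sigma>2 *v e))) - Y (B x (gamma_star \<sigma>1 \<sigma>2 \<gamma> (C x) (X x) (B x) e))" for e
  proof -
    have "Y (B x (\<sigma>2 *v e)) \<in> D" using BD YD by blast
    then have Az_v: "Az (Y (B x (\<sigma>2 *v e)))
        = - Y (A (B x (\<sigma>2 *v e))) - Y (B x (\<sigma>1 *v C x (Y (B x (\<sigma>2 *v e)))))"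
      using Az by (simp add: blinfun_left_inverse_apply[OF Y(3)])
    show ?thesis
      by (simp add: gamma_star_def Y B(2) X(2) Az_v matrix_inv_cancel[OF assms(3)]
          blinfun.add_left blinfun.minus_left blinfun.minus_right blinfun.diff_right
          blinfun.add_right algebra_simps)
  qed
  ultimately show ?thesis using Y(1) by blast
qed

theorem mainTheorem6:
  fixes J :: "'k::{real_inner,complete_space} \<Rightarrow> 'k"
    and K :: "'k \<Rightarrow> 'k \<Rightarrow> complex"
    and \<sigma>1 \<sigma>2 \<gamma> :: "complex^2^2"
    and A Az :: "'k \<Rightarrow> 'k" and D :: "'k set"
    and C :: "real \<Rightarrow> 'k \<Rightarrow>\<^sub>L (complex^2)"
    and X :: "real \<Rightarrow> 'k \<Rightarrow>\<^sub>L 'k"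
    and B :: "real \<Rightarrow> (complex^2) \<Rightarrow>\<^sub>L 'k"
    and \<Omega> :: "real set"
  assumes "krein_space J K"
    and "invertible \<sigma>1" and "cadj \<sigma>1 = \<sigma>1" and "cadj \<sigma>2 = \<sigma>2" and "cadj \<gamma> = - \<gamma>"
    and "vessel J \<sigma>1 \<sigma>2 \<gamma> A Az D C X B \<Omega>"
    and "x \<in> \<Omega>"
  shows "(\<exists>D'. ((\<lambda>y. C y o\<^sub>L binv (X y)) has_vector_derivative D') (at x)
            \<and> (\<forall>u\<in>D. \<sigma>1 *v D' u
                 = \<sigma>2 *v C x (binv (X x) (A u))
                   + gamma_star \<sigma>1 \<sigma>2 \<gamma> (C x) (X x) (B x) (C x (binv (X x) u))))
       \<and> (\<exists>E'. ((\<lambda>y. binv (X y) o\<^sub>L B y) has_vector_derivative E') (at x)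
            \<and> (\<forall>e. E' (\<sigma>1 *v e)
                 = Az (binv (X x) (B x (\<sigma>2 *v e)))
                   - binv (X x) (B x (gamma_star \<sigma>1 \<sigma>2 \<gamma> (C x) (X x) (B x) e))))"
  using vessel_has_vector_derivative_C_binv[OF assms(6,7,2)]
    vessel_has_vector_derivative_binv_B[OF assms(6,7,2)] by blast

end
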